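(* Let $K\in\mathbb R^{m\times p}$, $h\in\mathbb R^p$, $x^*\ge0$, and $y\sim\mathcal N(Kx^*,I_m)$. The Rust–Burrus interval satisfies $\mathbb P(h^\top x^*\in I_{\mathrm{RB}}(y))\ge1-\alpha$ for every $\alpha\in(0,1)$ if and only if a $\chi^2_1$ random variable stochastically dominates $$\lambda(h^\top x^*,y)=\min_{h^\top x=h^\top x^*,\ x\ge0}\|y-Kx\|_2^2-\min_{x\ge0}\|y-Kx\|_2^2 .$$
   Context: The Rust–Burrus interval is $I_{\mathrm{RB}}(y)=[\min h^\top x,\max h^\top x]$ over $\{x\ge0:\|y-Kx\|_2^2\le z_{\alpha/2}^2+s^2(y)\}$ with $s^2(y)=\min_{x\ge0}\|y-Kx\|_2^2$, where $\mathbb P(N>z_{\alpha/2})=\alpha/2$ for $N\sim\mathcal N(0,1)$; vector inequalities are componentwise. A real random variable $X$ stochastically dominates $Y$ if $\mathbb P(X>z)\ge\mathbb P(Y>z)$ for all $z\in\mathbb R$. $\chi^2_1$ is the chi-squared distribution with one degree of freedom. *)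

theory Defs
  imports "HOL-Probability.Probability"
begin

definition std_normal :: "real measure" where
  "std_normal = density lborel (\<lambda>x. ennreal (std_normal_density x))"

definition gaussian_id :: "real ^ 'm \<Rightarrow> (real ^ 'm) measure" where
  "gaussian_id mu = density lborel
     (\<lambda>y. ennreal (\<Prod>i\<in>UNIV. std_normal_density (y $ i - mu $ i)))"

definition chi_sq_1 :: "real measure" where
  "chi_sq_1 = distr std_normal borel (\<lambda>x. x\<^sup>2)"

definition z_upper :: "real \<Rightarrow> real" where
  "z_upper a = (THE z. measure std_normal {z<..} = a)"

definition nonneg :: "real ^ 'p \<Rightarrow> bool" where
  "nonneg x \<longleftrightarrow> (\<forall>i. 0 \<le> x $ i)"

definition s2 :: "real ^ 'p ^ 'm \<Rightarrow> real ^ 'm \<Rightarrow> real" where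
  "s2 K y = Inf {(norm (y - K *v x))\<^sup>2 | x. nonneg x}"

text \<open>Rust--Burrus interval [min h^T x, max h^T x] over the feasible set;
  min/max are taken as inf/sup in the extended reals (they coincide with
  min/max whenever these exist).\<close>
definition RB_interval ::
  "real ^ 'p ^ 'm \<Rightarrow> real ^ 'p \<Rightarrow> real \<Rightarrow> real ^ 'm \<Rightarrow> real set" where
  "RB_interval K h \<alpha> y =
     (let F = {x. nonneg x \<and> (norm (y - K *v x))\<^sup>2 \<le> (z_upper (\<alpha>/2))\<^sup>2 + s2 K y}
      in {t. (INF x\<in>F. ereal (h \<bullet> x)) \<le> ereal t \<and> ereal t \<le> (SUP x\<in>F. ereal (h \<bullet> x))})"

definition lambda_stat ::
  "real ^ 'p ^ 'm \<Rightarrow> real ^ 'p \<Rightarrow> real \<Rightarrow> real ^ 'm \<Rightarrow> real" where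
  "lambda_stat K h t y =
     Inf {(norm (y - K *v x))\<^sup>2 | x. h \<bullet> x = t \<and> nonneg x} - s2 K y"

definition stoch_dominates :: "real measure \<Rightarrow> real measure \<Rightarrow> bool" where
  "stoch_dominates PX PY \<longleftrightarrow> (\<forall>z. measure PX {z<..} \<ge> measure PY {z<..})"

end

theory Submission
  imports Defs
begin

text \<open>For fixed data \<open>y\<close>, the value \<open>t = h \<bullet> x\<^sup>*\<close> lies in the Rust--Burrus interval iff some
  \<open>x \<ge> 0\<close> with \<open>h \<bullet> x = t\<close> is feasible, i.e. iff \<open>\<lambda>(t, y) \<le> z\<^sub>\<alpha>\<^sub>/\<^sub>2\<^sup>2\<close>: the values of
  \<open>h \<bullet> x\<close> over the convex feasible set form a closed interval, and the least-squares minima are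
  attained because linear images of the orthant are closed. So the coverage probability is
  \<open>1 - P(\<lambda> > z\<^sub>\<alpha>\<^sub>/\<^sub>2\<^sup>2)\<close>, whereas \<open>P(\<chi>\<^sup>2\<^sub>1 > z\<^sub>\<alpha>\<^sub>/\<^sub>2\<^sup>2) = \<alpha>\<close>; as \<open>\<alpha>\<close> ranges over
  \<open>(0,1)\<close> these thresholds sweep out \<open>(0,\<infinity>)\<close>, which gives the equivalence.\<close>

lemma orthant_eq_convex_cone_hull:
  "{x::real^'p. nonneg x} = convex_cone hull (range (\<lambda>i. axis i 1))"
proof
  show "convex_cone hull (range (\<lambda>i. axis i 1)) \<subseteq> {x::real^'p. nonneg x}"
  proof (rule hull_minimal)
    show "range (\<lambda>i. axis i 1) \<subseteq> {x::real^'p. nonneg x}"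
      by (auto simp: nonneg_def axis_def)
    show "convex_cone {x::real^'p. nonneg x}"
      unfolding convex_cone_def conic_def convex_def nonneg_def
      by (auto intro!: exI[of _ 0] add_nonneg_nonneg)
  qed
next
  show "{x::real^'p. nonneg x} \<subseteq> convex_cone hull (range (\<lambda>i. axis i 1))"
  proof
    fix x :: "real^'p"
    assume "x \<in> {x. nonneg x}"
    hence nn: "\<And>i. 0 \<le> x $ i" by (simp add: nonneg_def)
    let ?H = "convex_cone hull (range (\<lambda>i. axis i (1::real)))"
    have "(\<Sum>i\<in>I. x $ i *\<^sub>R axis i 1) \<in> ?H" for I :: "'p set"
    proof (induction I rule: infinite_finite_induct)
      case (insert a A)
      have "x $ a *\<^sub>R axis a 1 \<in> ?H"
        using nn by (simp add: hull_inc convex_cone_hull_mul)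
      then show ?case using insert by (simp add: convex_cone_hull_add)
    qed (simp_all add: convex_cone_hull_contains_0)
    moreover have "x = (\<Sum>i\<in>UNIV. x $ i *\<^sub>R axis i 1)"
      by (simp add: vec_eq_iff axis_def sum.delta if_distrib cong: if_cong)
    ultimately show "x \<in> ?H" by metis
  qed
qed

lemma closed_linear_image_orthant:
  fixes f :: "real^'p \<Rightarrow> 'b::euclidean_space"
  assumes "linear f"
  shows "closed (f ` {x. nonneg x})"
  unfolding orthant_eq_convex_cone_hull
  by (metis assms closed_convex_cone_hull convex_cone_hull_linear_image finite finite_imageI)

lemma closed_snd_image_bounded_fst:
  fixes G :: "('a::euclidean_space \<times> 'b::euclidean_space) set"
  assumes "closed G" and "bounded (fst ` G)"
  shows "closed (snd ` G)"
  unfolding closed_sequential_limits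
proof (intro allI impI, elim conjE)
  fix s l
  assume s: "\<forall>n. s n \<in> snd ` G" and lim: "s \<longlonglongrightarrow> l"
  then have "\<forall>n. \<exists>p\<in>G. snd p = s n" by force
  then obtain g where g: "\<And>n. g n \<in> G" "\<And>n. snd (g n) = s n" by metis
  obtain B1 where B1: "\<forall>w\<in>fst ` G. norm w \<le> B1"
    using assms(2) by (auto simp: bounded_iff)
  obtain B2 where B2: "\<forall>w\<in>range s. norm w \<le> B2"
    using convergent_imp_bounded[OF lim] by (auto simp: bounded_iff)
  define H where "H = (cball 0 B1 \<times> cball 0 B2) \<inter> G"
  have "compact H"
    unfolding H_def by (intro compact_Int_closed compact_Times compact_cball assms(1))
  moreover have "\<forall>n. g n \<in> H"
    using g B1 B2 unfolding H_def by (auto simp: mem_Times_iff)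
  ultimately obtain p r where p: "p \<in> H" "strict_mono r" "(g \<circ> r) \<longlonglongrightarrow> p"
    using seq_compactE[OF compact_imp_seq_compact] by metis
  have "(s \<circ> r) \<longlonglongrightarrow> snd p"
    using tendsto_snd[OF p(3)] g(2) by (simp add: comp_def)
  with LIMSEQ_subseq_LIMSEQ[OF lim p(2)] have "snd p = l" by (metis LIMSEQ_unique)
  with p(1) show "l \<in> snd ` G" unfolding H_def by blast
qed

text \<open>The set \<open>{x. nonneg x \<and> f x \<in> C}\<close> may be unbounded; closedness of its image under \<open>g\<close>
  comes from the closed cone of pairs \<open>(f x, g x)\<close>, whose first components stay in \<open>C\<close>.\<close>

lemma closed_interval_values_orthant:
  fixes f :: "real^'p \<Rightarrow> 'a::euclidean_space" and g :: "real^'p \<Rightarrow> real"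
  assumes f: "linear f" and g: "linear g" and C: "compact C" "convex C"
  shows "closed (g ` {x. nonneg x \<and> f x \<in> C})" and "is_interval (g ` {x. nonneg x \<and> f x \<in> C})"
proof -
  let ?G = "(\<lambda>x. (f x, g x)) ` {x. nonneg x} \<inter> C \<times> UNIV"
  have "g ` {x. nonneg x \<and> f x \<in> C} = snd ` ?G" by force
  moreover have "closed ?G"
    using f g C by (intro closed_Int closed_linear_image_orthant closed_Times)
      (auto simp: compact_imp_closed linear_conv_bounded_linear bounded_linear_Pair)
  moreover have "bounded (fst ` ?G)"
    using compact_imp_bounded[OF C(1)] by (rule bounded_subset) force
  ultimately show "closed (g ` {x. nonneg x \<and> f x \<in> C})"
    by (simp add: closed_snd_image_bounded_fst)
  have "{x. nonneg x \<and> f x \<in> C} = {x. nonneg x} \<inter> f -` C" by auto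
  moreover have "convex {x::real^'p. nonneg x}"
    unfolding orthant_eq_convex_cone_hull by (rule convex_convex_cone_hull)
  ultimately have "convex {x. nonneg x \<and> f x \<in> C}"
    using convex_linear_vimage[OF f C(2)] by (simp add: convex_Int)
  then show "is_interval (g ` {x. nonneg x \<and> f x \<in> C})"
    unfolding is_interval_convex_1 by (rule convex_linear_image[OF g])
qed

lemma mem_closed_interval_between_INF_SUP:
  fixes T :: "real set"
  assumes "closed T" "is_interval T"
    and "(INF s\<in>T. ereal s) \<le> ereal t" and "ereal t \<le> (SUP s\<in>T. ereal s)"
  shows "t \<in> T"
proof (rule ccontr)
  assume t: "t \<notin> T"
  have "T \<noteq> {}" using assms(3) by (auto simp: top_ereal_def)
  have "(\<forall>s\<in>T. s < t) \<or> (\<forall>s\<in>T. t < s)"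
    using t \<open>is_interval T\<close> unfolding is_interval_1 by (meson not_less)
  then show False
  proof
    assume below: "\<forall>s\<in>T. s < t"
    hence bdd: "bdd_above T" by (meson bdd_aboveI less_imp_le)
    have "(SUP s\<in>T. ereal s) \<le> ereal (Sup T)"
      by (rule SUP_least) (simp add: cSup_upper bdd)
    moreover have "Sup T < t"
      using below closed_contains_Sup[OF \<open>T \<noteq> {}\<close> bdd \<open>closed T\<close>] by blast
    ultimately show False
      using assms(4) by (meson ereal_less_eq(3) linorder_not_le order.trans)
  next
    assume above: "\<forall>s\<in>T. t < s"
    hence bdd: "bdd_below T" by (meson bdd_belowI less_imp_le)
    have "ereal (Inf T) \<le> (INF s\<in>T. ereal s)"
      by (rule INF_greatest) (simp add: cInf_lower bdd)
    moreover have "t < Inf T"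
      using above closed_contains_Inf[OF \<open>T \<noteq> {}\<close> bdd \<open>closed T\<close>] by blast
    ultimately show False
      using assms(3) by (meson ereal_less_eq(3) linorder_not_le order.trans)
  qed
qed

lemma Inf_norm_sq_eq_infdist_sq:
  fixes f :: "'a \<Rightarrow> 'b::euclidean_space"
  assumes "closed (f ` Collect P)" and "Collect P \<noteq> {}"
  shows "Inf {(norm (y - f x))\<^sup>2 | x. P x} = (infdist y (f ` Collect P))\<^sup>2"
    and "\<exists>x. P x \<and> (norm (y - f x))\<^sup>2 = (infdist y (f ` Collect P))\<^sup>2"
proof -
  let ?D = "f ` Collect P"
  obtain w0 where w0: "w0 \<in> ?D" "infdist y ?D = dist y w0"
    using infdist_attains_inf[OF assms(1)] assms(2) by blast
  have lower: "(infdist y ?D)\<^sup>2 \<le> (norm (y - w))\<^sup>2" if "w \<in> ?D" for w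
    using infdist_le[OF that, of y] by (simp add: dist_norm power_mono infdist_nonneg)
  have "{(norm (y - f x))\<^sup>2 | x. P x} = (\<lambda>w. (norm (y - w))\<^sup>2) ` ?D" by auto
  also have "Inf \<dots> = (infdist y ?D)\<^sup>2"
    by (rule cInf_eq_minimum) (use w0 lower in \<open>auto simp: dist_norm\<close>)
  finally show "Inf {(norm (y - f x))\<^sup>2 | x. P x} = (infdist y ?D)\<^sup>2" .
  show "\<exists>x. P x \<and> (norm (y - f x))\<^sup>2 = (infdist y ?D)\<^sup>2"
    using w0 by (auto simp: dist_norm)
qed

lemma closed_image_orthant_slice:
  fixes K :: "real ^ 'p ^ 'm"
  shows "closed ((\<lambda>x. K *v x) ` {x. h \<bullet> x = t \<and> nonneg x})"
proof -
  have "linear (\<lambda>x. (K *v x, h \<bullet> x))"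
    by (rule linearI) (auto simp: matrix_vector_right_distrib inner_add_right matrix_vector_mult_scaleR)
  then have "closed ((\<lambda>w. (w, t)) -` (\<lambda>x. (K *v x, h \<bullet> x)) ` {x. nonneg x})"
    by (intro closed_vimage closed_linear_image_orthant) (auto intro!: continuous_intros)
  moreover have "(\<lambda>w. (w, t)) -` (\<lambda>x. (K *v x, h \<bullet> x)) ` {x. nonneg x}
      = (\<lambda>x. K *v x) ` {x. h \<bullet> x = t \<and> nonneg x}"
    by auto
  ultimately show ?thesis by simp
qed

lemma s2_eq_infdist_sq: "s2 K y = (infdist y ((\<lambda>x. K *v x) ` {x. nonneg x}))\<^sup>2"
proof -
  have "nonneg (0 :: real ^ 'p)" by (simp add: nonneg_def)
  then show ?thesis
    unfolding s2_def
    by (intro Inf_norm_sq_eq_infdist_sq closed_linear_image_orthant) auto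
qed

lemma s2_nonneg: "0 \<le> s2 K y"
  by (simp add: s2_eq_infdist_sq)

lemma lambda_stat_eq_infdist_sq:
  assumes "nonneg xs"
  shows "lambda_stat K h (h \<bullet> xs) y
    = (infdist y ((\<lambda>x. K *v x) ` {x. h \<bullet> x = h \<bullet> xs \<and> nonneg x}))\<^sup>2
      - (infdist y ((\<lambda>x. K *v x) ` {x. nonneg x}))\<^sup>2"
proof -
  have "{x. h \<bullet> x = h \<bullet> xs \<and> nonneg x} \<noteq> {}" using assms by blast
  then show ?thesis
    unfolding lambda_stat_def s2_eq_infdist_sq
    by (simp add: Inf_norm_sq_eq_infdist_sq(1)[OF closed_image_orthant_slice])
qed

lemma continuous_on_lambda_stat:
  assumes "nonneg xs"
  shows "continuous_on UNIV (lambda_stat K h (h \<bullet> xs))"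
  unfolding lambda_stat_eq_infdist_sq[OF assms, abs_def] by (intro continuous_intros)

lemma lambda_stat_le_iff:
  assumes "nonneg xs"
  shows "lambda_stat K h (h \<bullet> xs) y \<le> c
    \<longleftrightarrow> (\<exists>x. nonneg x \<and> h \<bullet> x = h \<bullet> xs \<and> (norm (y - K *v x))\<^sup>2 \<le> c + s2 K y)"
proof -
  let ?S = "{(norm (y - K *v x))\<^sup>2 | x. h \<bullet> x = h \<bullet> xs \<and> nonneg x}"
  have ne: "{x. h \<bullet> x = h \<bullet> xs \<and> nonneg x} \<noteq> {}" using assms by blast
  note min = Inf_norm_sq_eq_infdist_sq[OF closed_image_orthant_slice ne, of y K]
  obtain x1 where x1: "h \<bullet> x1 = h \<bullet> xs" "nonneg x1" "(norm (y - K *v x1))\<^sup>2 = Inf ?S"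
    using min(2) unfolding min(1)[symmetric] by blast
  have lower: "Inf ?S \<le> (norm (y - K *v x))\<^sup>2" if "nonneg x" "h \<bullet> x = h \<bullet> xs" for x
    by (rule cInf_lower) (use that in \<open>auto intro: bdd_belowI[of _ 0]\<close>)
  show ?thesis
    unfolding lambda_stat_def
  proof
    assume "Inf ?S - s2 K y \<le> c"
    then show "\<exists>x. nonneg x \<and> h \<bullet> x = h \<bullet> xs \<and> (norm (y - K *v x))\<^sup>2 \<le> c + s2 K y"
      using x1 by (intro exI[of _ x1]) auto
  next
    assume "\<exists>x. nonneg x \<and> h \<bullet> x = h \<bullet> xs \<and> (norm (y - K *v x))\<^sup>2 \<le> c + s2 K y"
    then obtain x where "nonneg x" "h \<bullet> x = h \<bullet> xs" "(norm (y - K *v x))\<^sup>2 \<le> c + s2 K y"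
      by blast
    with lower show "Inf ?S - s2 K y \<le> c" by fastforce
  qed
qed

lemma RB_interval_iff:
  fixes K :: "real ^ 'p ^ 'm"
  shows "t \<in> RB_interval K h \<alpha> y
    \<longleftrightarrow> (\<exists>x. nonneg x \<and> h \<bullet> x = t \<and> (norm (y - K *v x))\<^sup>2 \<le> (z_upper (\<alpha>/2))\<^sup>2 + s2 K y)"
    (is "_ \<longleftrightarrow> (\<exists>x. _ \<and> _ \<and> _ \<le> ?c)")
proof -
  define F where "F = {x. nonneg x \<and> (norm (y - K *v x))\<^sup>2 \<le> ?c}"
  have "0 \<le> ?c" using s2_nonneg[of K y] by simp
  then have "(norm v)\<^sup>2 \<le> ?c \<longleftrightarrow> norm v \<le> sqrt ?c" for v :: "real ^ 'm"
    by (metis norm_ge_zero real_sqrt_abs real_sqrt_le_iff abs_of_nonneg)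
  then have F: "F = {x. nonneg x \<and> K *v x \<in> cball y (sqrt ?c)}"
    unfolding F_def by (auto simp: dist_norm)
  let ?T = "(\<lambda>x. h \<bullet> x) ` F"
  have "closed ?T" "is_interval ?T"
    unfolding F using closed_interval_values_orthant[of "(*v) K" "(\<bullet>) h" "cball y (sqrt ?c)"]
    by (simp_all add: linear_conv_bounded_linear bounded_linear_inner_right)
  moreover have "t \<in> RB_interval K h \<alpha> y
      \<longleftrightarrow> (INF s\<in>?T. ereal s) \<le> ereal t \<and> ereal t \<le> (SUP s\<in>?T. ereal s)"
    unfolding RB_interval_def F_def Let_def by (simp add: image_comp o_def)
  ultimately have "t \<in> RB_interval K h \<alpha> y \<longleftrightarrow> t \<in> ?T"
    using mem_closed_interval_between_INF_SUP by (blast intro: INF_lower SUP_upper)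
  then show ?thesis unfolding F_def by auto
qed

lemma RB_interval_covers_iff_lambda_stat_le:
  fixes K :: "real ^ 'p ^ 'm"
  assumes "nonneg xs"
  shows "h \<bullet> xs \<in> RB_interval K h \<alpha> y \<longleftrightarrow> lambda_stat K h (h \<bullet> xs) y \<le> (z_upper (\<alpha>/2))\<^sup>2"
  unfolding RB_interval_iff lambda_stat_le_iff[OF assms] ..

lemma nn_integral_std_normal_density_shift:
  "(\<integral>\<^sup>+x. ennreal (std_normal_density (x - c)) \<partial>lborel) = 1"
proof -
  interpret prob_space "density lborel (normal_density c 1)"
    by (rule prob_space_normal_density) simp
  have "(\<integral>\<^sup>+x. ennreal (normal_density c 1 x) \<partial>lborel) = 1"
    using emeasure_space_1 by (simp add: emeasure_density)
  then show ?thesis by (simp add: normal_density_def)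
qed

lemma prob_space_gaussian_id: "prob_space (gaussian_id (mu :: real^'m))"
proof
  let ?f = "\<lambda>(b::real^'m) x. ennreal (std_normal_density (x - mu \<bullet> b))"
  have Basis: "(Basis :: (real^'m) set) = range (\<lambda>i. axis i 1)"
    by (auto simp: Basis_vec_def)
  have inj: "inj (\<lambda>i::'m. axis i (1::real))" by (auto simp: inj_on_def axis_eq_axis)
  have density_prod: "ennreal (\<Prod>i\<in>UNIV. std_normal_density (y $ i - mu $ i))
      = (\<Prod>b\<in>Basis. ?f b (y \<bullet> b))" for y :: "real^'m"
  proof -
    have "(\<Prod>b\<in>Basis. ?f b (y \<bullet> b)) = (\<Prod>i\<in>UNIV. ?f (axis i 1) (y \<bullet> axis i 1))"
      unfolding Basis by (rule prod.reindex[OF inj, unfolded comp_def])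
    also have "\<dots> = ennreal (\<Prod>i\<in>UNIV. std_normal_density (y $ i - mu $ i))"
      by (simp add: inner_axis prod_ennreal normal_density_nonneg)
    finally show ?thesis by simp
  qed
  have "emeasure (gaussian_id mu) (space (gaussian_id mu))
      = (\<integral>\<^sup>+y. (\<Prod>b\<in>Basis. ?f b (y \<bullet> b)) \<partial>lborel)"
    unfolding gaussian_id_def by (simp add: emeasure_density density_prod)
  also have "\<dots> = (\<Prod>b\<in>Basis. (\<integral>\<^sup>+x. ?f b x \<partial>lborel))"
    by (rule nn_integral_lborel_prod) auto
  also have "\<dots> = 1" by (simp add: nn_integral_std_normal_density_shift)
  finally show "emeasure (gaussian_id mu) (space (gaussian_id mu)) = 1" .
qed

lemma sets_gaussian_id [simp, measurable_cong]: "sets (gaussian_id mu) = sets borel"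
  by (simp add: gaussian_id_def)

lemma space_gaussian_id [simp]: "space (gaussian_id mu) = UNIV"
  by (simp add: gaussian_id_def)

lemma prob_space_std_normal: "prob_space std_normal"
  unfolding std_normal_def using prob_space_normal_density[of 1 0] by simp

interpretation std_normal: prob_space std_normal
  by (rule prob_space_std_normal)

lemma sets_std_normal [simp, measurable_cong]: "sets std_normal = sets borel"
  by (simp add: std_normal_def)

lemma space_std_normal [simp]: "space std_normal = UNIV"
  by (simp add: std_normal_def)

lemma emeasure_std_normal:
  assumes "A \<in> sets borel"
  shows "emeasure std_normal A = (\<integral>\<^sup>+x. ennreal (std_normal_density x) * indicator A x \<partial>lborel)"
  unfolding std_normal_def using assms by (simp add: emeasure_density)

lemma std_normal_density_le_1: "std_normal_density x \<le> 1"
proof -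
  have "1 \<le> sqrt (2 * pi)" using pi_gt3 by (simp add: real_le_rsqrt)
  then show ?thesis
    unfolding std_normal_density_def by (intro mult_le_one) auto
qed

lemma measure_std_normal_Ioc_le:
  assumes "a \<le> b"
  shows "measure std_normal {a<..b} \<le> b - a"
proof -
  have "emeasure std_normal {a<..b}
      = (\<integral>\<^sup>+x. ennreal (std_normal_density x) * indicator {a<..b} x \<partial>lborel)"
    by (rule emeasure_std_normal) simp
  also have "\<dots> \<le> (\<integral>\<^sup>+x. indicator {a<..b} x \<partial>lborel)"
    by (intro nn_integral_mono) (auto simp: indicator_def std_normal_density_le_1)
  finally show ?thesis using assms by (simp add: std_normal.emeasure_eq_measure)
qed

lemma measure_std_normal_Ioc_pos:
  assumes "a < b"
  shows "0 < measure std_normal {a<..b}"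
proof -
  define m where "m = std_normal_density (\<bar>a\<bar> + \<bar>b\<bar>)"
  have m: "0 < m" unfolding m_def by (simp add: normal_density_pos)
  have m_le: "m \<le> std_normal_density x" if "x \<in> {a<..b}" for x
  proof -
    have "x\<^sup>2 \<le> (\<bar>a\<bar> + \<bar>b\<bar>)\<^sup>2"
      using that by (intro power2_le_iff_abs_le[THEN iffD2]) auto
    then show ?thesis
      unfolding m_def std_normal_density_def by (simp add: divide_right_mono)
  qed
  have "ennreal (m * (b - a)) = (\<integral>\<^sup>+x. ennreal m * indicator {a<..b} x \<partial>lborel)"
    using assms m by (simp add: nn_integral_cmult ennreal_mult)
  also have "\<dots> \<le> (\<integral>\<^sup>+x. ennreal (std_normal_density x) * indicator {a<..b} x \<partial>lborel)"
    by (intro nn_integral_mono) (auto simp: indicator_def m_le)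
  also have "\<dots> = ennreal (measure std_normal {a<..b})"
    by (simp add: emeasure_std_normal flip: std_normal.emeasure_eq_measure)
  finally have "m * (b - a) \<le> measure std_normal {a<..b}"
    by (simp add: ennreal_le_iff)
  moreover have "0 < m * (b - a)" using m assms by simp
  ultimately show ?thesis by linarith
qed

lemma measure_std_normal_lessThan_uminus: "measure std_normal {..< -a} = measure std_normal {a<..}"
proof -
  have "emeasure std_normal {..< -a}
      = (\<integral>\<^sup>+x. ennreal (std_normal_density x) * indicator {..< -a} x \<partial>lborel)"
    by (rule emeasure_std_normal) simp
  also have "\<dots> = ennreal \<bar>-1\<bar> * (\<integral>\<^sup>+x. ennreal (std_normal_density (0 + -1 * x))
      * indicator {..< -a} (0 + -1 * x) \<partial>lborel)"
    by (rule nn_integral_real_affine) auto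
  also have "\<dots> = (\<integral>\<^sup>+x. ennreal (std_normal_density x) * indicator {a<..} x \<partial>lborel)"
    by (simp add: std_normal_density_def indicator_def)
  also have "\<dots> = emeasure std_normal {a<..}"
    by (rule emeasure_std_normal[symmetric]) simp
  finally show ?thesis by (simp add: std_normal.emeasure_eq_measure)
qed

lemma measure_std_normal_singleton: "measure std_normal {c} = 0"
proof -
  have "measure std_normal {c} \<le> e" if "e > 0" for e
  proof -
    have "measure std_normal {c} \<le> measure std_normal {c - e<..c}"
      by (rule std_normal.finite_measure_mono) (use that in auto)
    also have "\<dots> \<le> e" using measure_std_normal_Ioc_le[of "c - e" c] that by simp
    finally show ?thesis .
  qed
  then show ?thesis by (meson dense measure_nonneg not_le order.antisym)
qed

definition normal_tail :: "real \<Rightarrow> real" where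
  "normal_tail z = measure std_normal {z<..}"

lemma normal_tail_diff:
  assumes "a \<le> b"
  shows "normal_tail a - normal_tail b = measure std_normal {a<..b}"
proof -
  have "{a<..} = {a<..b} \<union> {b<..}" using assms by auto
  then have "normal_tail a = measure std_normal ({a<..b} \<union> {b<..})"
    unfolding normal_tail_def by simp
  also have "\<dots> = measure std_normal {a<..b} + normal_tail b"
    unfolding normal_tail_def by (rule std_normal.finite_measure_Union) auto
  finally show ?thesis by simp
qed

lemma normal_tail_strict_antimono: "a < b \<Longrightarrow> normal_tail b < normal_tail a"
  using normal_tail_diff[of a b] measure_std_normal_Ioc_pos[of a b] by simp

lemma continuous_on_normal_tail: "continuous_on S normal_tail"
proof -
  have "\<bar>normal_tail a - normal_tail b\<bar> \<le> \<bar>a - b\<bar>" if "a \<le> b" for a b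
    using normal_tail_diff[OF that] measure_std_normal_Ioc_le[OF that]
      measure_nonneg[of std_normal "{a<..b}"] that by simp
  then have "\<bar>normal_tail a - normal_tail b\<bar> \<le> \<bar>a - b\<bar>" for a b
    by (metis abs_minus_commute linear)
  then have "1-lipschitz_on S normal_tail"
    unfolding lipschitz_on_def by (simp add: dist_real_def)
  then show ?thesis by (rule lipschitz_on_continuous_on)
qed

lemma normal_tail_0: "normal_tail 0 = 1/2"
proof -
  have "UNIV = ({0<..} \<union> {..<0}) \<union> {0::real}" by auto
  then have "1 = measure std_normal (({0<..} \<union> {..<0}) \<union> {0::real})"
    using std_normal.prob_space by simp
  also have "\<dots> = measure std_normal {0<..} + measure std_normal {..<0} + measure std_normal {0}"
    by (subst std_normal.finite_measure_Union; simp; subst std_normal.finite_measure_Union; auto)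
  finally show ?thesis
    using measure_std_normal_lessThan_uminus[of 0] measure_std_normal_singleton
    unfolding normal_tail_def by simp
qed

lemma normal_tail_tendsto_0: "(\<lambda>n. normal_tail (real n)) \<longlonglongrightarrow> 0"
proof -
  have "(\<lambda>n. measure std_normal {real n<..}) \<longlonglongrightarrow> measure std_normal (\<Inter>n. {real n<..})"
    by (rule std_normal.finite_Lim_measure_decseq) (auto simp: decseq_def)
  moreover have "(\<Inter>n. {real n<..}) = {}"
    by (auto simp: not_less) (metis less_asym reals_Archimedean2)
  ultimately show ?thesis unfolding normal_tail_def by simp
qed

lemma z_upper_normal_tail: "z_upper (normal_tail r) = r"
  unfolding z_upper_def normal_tail_def[symmetric]
proof (rule the_equality)
  show "normal_tail r = normal_tail r" ..
  fix w
  assume "normal_tail w = normal_tail r"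
  then show "w = r"
    by (cases w r rule: linorder_cases) (auto dest: normal_tail_strict_antimono)
qed

lemma normal_tail_z_upper:
  assumes "0 < a" "a < 1/2"
  shows "normal_tail (z_upper a) = a" and "0 \<le> z_upper a"
proof -
  obtain n where n: "normal_tail (real n) < a"
    using order_tendstoD(2)[OF normal_tail_tendsto_0 assms(1)] by (auto simp: eventually_sequentially)
  have "\<exists>r. 0 \<le> r \<and> r \<le> real n \<and> normal_tail r = a"
    by (rule IVT2') (use n normal_tail_0 assms continuous_on_normal_tail in auto)
  then obtain r where r: "0 \<le> r" "normal_tail r = a" by blast
  then have "z_upper a = r" using z_upper_normal_tail[of r] by simp
  with r show "normal_tail (z_upper a) = a" and "0 \<le> z_upper a" by simp_all
qed

lemma measure_chi_sq_1_greaterThan_sq: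
  assumes "0 \<le> r"
  shows "measure chi_sq_1 {r\<^sup>2<..} = 2 * normal_tail r"
proof -
  have "r\<^sup>2 < x\<^sup>2 \<longleftrightarrow> r < \<bar>x\<bar>" for x
    by (metis abs_le_square_iff abs_of_nonneg assms not_le)
  then have "(\<lambda>x::real. x\<^sup>2) -` {r\<^sup>2<..} = {r<..} \<union> {..< -r}"
    by (intro set_eqI) (simp, arith)
  then have "measure chi_sq_1 {r\<^sup>2<..} = measure std_normal ({r<..} \<union> {..< -r})"
    unfolding chi_sq_1_def by (subst measure_distr) auto
  also have "\<dots> = measure std_normal {r<..} + measure std_normal {..< -r}"
    by (rule std_normal.finite_measure_Union) (use assms in auto)
  finally show ?thesis
    by (simp add: measure_std_normal_lessThan_uminus normal_tail_def)
qed

lemma measure_chi_sq_1_greaterThan_neg: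
  assumes "z < 0"
  shows "measure chi_sq_1 {z<..} = 1"
proof -
  have "(\<lambda>x::real. x\<^sup>2) -` {z<..} = UNIV"
    using assms by (auto intro: less_le_trans[OF _ zero_le_power2])
  then show ?thesis
    unfolding chi_sq_1_def using std_normal.prob_space by (subst measure_distr) auto
qed

text \<open>Since \<open>\<alpha> \<mapsto> z_upper (\<alpha>/2)\<^sup>2\<close> maps \<open>(0,1)\<close> onto \<open>(0,\<infinity>)\<close> and the \<open>\<chi>\<^sup>2\<^sub>1\<close> tail
  at that point is exactly \<open>\<alpha>\<close>, dominance by \<open>\<chi>\<^sup>2\<^sub>1\<close> only has to be checked at these points;
  for \<open>z \<le> 0\<close> the \<open>\<chi>\<^sup>2\<^sub>1\<close> tail is 1.\<close>

lemma stoch_dominates_chi_sq_1_iff: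
  assumes "prob_space P"
  shows "stoch_dominates chi_sq_1 P
    \<longleftrightarrow> (\<forall>\<alpha>. 0 < \<alpha> \<and> \<alpha> < 1 \<longrightarrow> measure P {(z_upper (\<alpha>/2))\<^sup>2<..} \<le> \<alpha>)"
  unfolding stoch_dominates_def
proof (intro iffI allI impI)
  fix \<alpha> :: real
  assume dom: "\<forall>z. measure P {z<..} \<le> measure chi_sq_1 {z<..}" and "0 < \<alpha> \<and> \<alpha> < 1"
  then have z: "normal_tail (z_upper (\<alpha>/2)) = \<alpha>/2" "0 \<le> z_upper (\<alpha>/2)"
    using normal_tail_z_upper[of "\<alpha>/2"] by auto
  have "measure P {(z_upper (\<alpha>/2))\<^sup>2<..} \<le> measure chi_sq_1 {(z_upper (\<alpha>/2))\<^sup>2<..}"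
    using dom by blast
  also have "\<dots> = \<alpha>"
    using measure_chi_sq_1_greaterThan_sq[OF z(2)] z(1) by simp
  finally show "measure P {(z_upper (\<alpha>/2))\<^sup>2<..} \<le> \<alpha>" .
next
  fix z :: real
  assume quant: "\<forall>\<alpha>. 0 < \<alpha> \<and> \<alpha> < 1 \<longrightarrow> measure P {(z_upper (\<alpha>/2))\<^sup>2<..} \<le> \<alpha>"
  show "measure P {z<..} \<le> measure chi_sq_1 {z<..}"
  proof (cases "0 < z")
    case True
    define r where "r = sqrt z"
    have r: "0 < r" "r\<^sup>2 = z" using True by (auto simp: r_def)
    have "normal_tail (r + 1) < normal_tail r"
      by (rule normal_tail_strict_antimono) simp
    moreover have "0 \<le> normal_tail (r + 1)" by (simp add: normal_tail_def)
    ultimately have "0 < normal_tail r" by linarith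
    moreover have "normal_tail r < 1/2"
      using normal_tail_strict_antimono[OF r(1)] normal_tail_0 by simp
    ultimately have "measure P {(z_upper (normal_tail r))\<^sup>2<..} \<le> 2 * normal_tail r"
      using quant[rule_format, of "2 * normal_tail r"] by simp
    then show ?thesis
      using r measure_chi_sq_1_greaterThan_sq[of r] by (simp add: z_upper_normal_tail)
  next
    case False
    then have "measure chi_sq_1 {z<..} = 1"
      using measure_chi_sq_1_greaterThan_neg measure_chi_sq_1_greaterThan_sq[of 0] normal_tail_0
      by (cases "z = 0") auto
    then show ?thesis using prob_space.prob_le_1[OF assms] by simp
  qed
qed

theorem lemma4p3:
  fixes K :: "real ^ 'p ^ 'm" and h :: "real ^ 'p" and xstar :: "real ^ 'p"
  assumes "nonneg xstar"
  shows "(\<forall>\<alpha>::real. 0 < \<alpha> \<and> \<alpha> < 1 \<longrightarrow>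
            measure (gaussian_id (K *v xstar)) {y. h \<bullet> xstar \<in> RB_interval K h \<alpha> y} \<ge> 1 - \<alpha>)
     \<longleftrightarrow> stoch_dominates chi_sq_1
            (distr (gaussian_id (K *v xstar)) borel (lambda_stat K h (h \<bullet> xstar)))"
proof -
  define M where "M = gaussian_id (K *v xstar)"
  define L where "L = lambda_stat K h (h \<bullet> xstar)"
  interpret prob_space M unfolding M_def by (rule prob_space_gaussian_id)
  have L: "L \<in> borel_measurable M"
    using borel_measurable_continuous_onI[OF continuous_on_lambda_stat[OF assms]]
    unfolding L_def M_def by (simp add: measurable_cong_sets[OF sets_gaussian_id refl])
  have coverage: "measure M {y. h \<bullet> xstar \<in> RB_interval K h \<alpha> y}
      = 1 - measure (distr M borel L) {(z_upper (\<alpha>/2))\<^sup>2<..}" for \<alpha>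
  proof -
    let ?A = "L -` {(z_upper (\<alpha>/2))\<^sup>2<..} \<inter> space M"
    have "{y. h \<bullet> xstar \<in> RB_interval K h \<alpha> y} = space M - ?A"
      using RB_interval_covers_iff_lambda_stat_le[OF assms, of h K \<alpha>]
      by (force simp: L_def M_def not_less)
    moreover have "?A \<in> events" using L by measurable
    ultimately show ?thesis
      using L by (simp add: prob_compl measure_distr)
  qed
  show ?thesis
    unfolding M_def[symmetric] L_def[symmetric] coverage
    using stoch_dominates_chi_sq_1_iff[OF prob_space_distr[OF L]] by auto
qed

end
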